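(* Let $\Gamma\subset\mathbb{O}$ be countable. Then there exists a countable totally ordered subset $\hat\Gamma\subset\mathbb{O}$ with $\sup(\hat\Gamma)=\sup(\Gamma)$ in $\overline{\mathbb{O}}$. Moreover, if $\Gamma\subset\mathbb{B}$ (respectively $\Gamma\subset\mathbb{L}$), then $\hat\Gamma$ can be taken with $\hat\Gamma\subset\mathbb{B}$ (respectively $\hat\Gamma\subset\mathbb{L}$).
   Context: Let $\mathcal{O}$ be the set of non-decreasing sequences $a:\mathbb{N}\to[0,\infty)$, $a\approx b$ iff $c_1a(n)\le b(n)\le c_2a(n)$ for all $n$ for some constants $0<c_1\le c_2$, $\mathbb{O}=\mathcal{O}/\!\approx$ with classes $[a(n)]$, ordered by $[a(n)]\le[b(n)]$ iff $a(n)\le Cb(n)$ for all $n$ for some $C>0$; $\overline{\mathbb{O}}$ is its Dedekind–MacNeille completion. $\mathbb{B}$ is the set of classes with $a(n+1)\le Ca(n)$ for all $n$ for some $C>0$; $\mathbb{L}$ is the set of classes with $[a(mn)]=[a(n)]$ for some integer $m\ge2$. *)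

theory Defs
  imports Complex_Main "HOL-Library.Countable_Set"
begin

definition Oseq :: "(nat \<Rightarrow> real) \<Rightarrow> bool" where
  "Oseq a \<longleftrightarrow> mono a \<and> (\<forall>n. 0 \<le> a n)"

definition approx :: "(nat \<Rightarrow> real) \<Rightarrow> (nat \<Rightarrow> real) \<Rightarrow> bool" where
  "approx a b \<longleftrightarrow> (\<exists>c1 c2. 0 < c1 \<and> c1 \<le> c2 \<and> (\<forall>n. c1 * a n \<le> b n \<and> b n \<le> c2 * a n))"

definition cls :: "(nat \<Rightarrow> real) \<Rightarrow> (nat \<Rightarrow> real) set" where
  "cls a = {b. Oseq b \<and> approx a b}"

definition Oclasses :: "(nat \<Rightarrow> real) set set" where
  "Oclasses = cls ` {a. Oseq a}"

definition Ole :: "(nat \<Rightarrow> real) set \<Rightarrow> (nat \<Rightarrow> real) set \<Rightarrow> bool" where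
  "Ole A B \<longleftrightarrow> (\<exists>a\<in>A. \<exists>b\<in>B. \<exists>C>0. \<forall>n. a n \<le> C * b n)"

definition BB :: "(nat \<Rightarrow> real) set set" where
  "BB = {A \<in> Oclasses. \<exists>a\<in>A. \<exists>C>0. \<forall>n. a (Suc n) \<le> C * a n}"

definition LL :: "(nat \<Rightarrow> real) set set" where
  "LL = {A \<in> Oclasses. \<exists>a\<in>A. \<exists>m::nat. 2 \<le> m \<and> cls (\<lambda>n. a (m * n)) = cls a}"

definition Oupper :: "(nat \<Rightarrow> real) set set \<Rightarrow> (nat \<Rightarrow> real) set set" where
  "Oupper S = {B \<in> Oclasses. \<forall>A\<in>S. Ole A B}"

definition Olower :: "(nat \<Rightarrow> real) set set \<Rightarrow> (nat \<Rightarrow> real) set set" where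
  "Olower S = {A \<in> Oclasses. \<forall>B\<in>S. Ole A B}"

text \<open>Dedekind-MacNeille completion of O: the cuts X \<subseteq> O with X = (X^u)^l,
  ordered by inclusion; O embeds via A \<mapsto> ({A}^u)^l.  The supremum in the
  completion of (the image of) a subset S \<subseteq> O is the cut (S^u)^l.\<close>
definition DM_completion :: "(nat \<Rightarrow> real) set set set" where
  "DM_completion = {X. X \<subseteq> Oclasses \<and> Olower (Oupper X) = X}"

definition DM_sup :: "(nat \<Rightarrow> real) set set \<Rightarrow> (nat \<Rightarrow> real) set set" where
  "DM_sup S = Olower (Oupper S)"

definition Ototal :: "(nat \<Rightarrow> real) set set \<Rightarrow> bool" where
  "Ototal S \<longleftrightarrow> (\<forall>A\<in>S. \<forall>B\<in>S. Ole A B \<or> Ole B A)"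

end

theory Submission
  imports Defs
begin

text \<open>Enumerate \<open>\<Gamma>\<close> as \<open>[a\<^sub>0], [a\<^sub>1], \<dots>\<close> and replace it by the chain of classes of the
  running maxima \<open>M\<^sub>k = max(a\<^sub>0, \<dots>, a\<^sub>k)\<close>.  Every \<open>a\<^sub>i\<close> lies below \<open>M\<^sub>i\<close>, and an upper bound
  of all \<open>a\<^sub>i\<close> bounds each finite maximum, so the chain has exactly the upper bounds of \<open>\<Gamma>\<close>
  and hence the same supremum in the completion.  Both the growth condition defining \<open>\<bbbB>\<close>
  and the dilation condition defining \<open>\<bbbL>\<close> (equivalently \<open>a(2n) \<le> C a(n)\<close>) are
  inherited by pointwise maxima, so the chain stays in \<open>\<bbbB>\<close> resp. \<open>\<bbbL>\<close>.\<close>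

definition dominated_by :: "(nat \<Rightarrow> real) \<Rightarrow> (nat \<Rightarrow> real) \<Rightarrow> bool" where
  "dominated_by a b \<longleftrightarrow> (\<exists>C>0. \<forall>n. a n \<le> C * b n)"

lemma le_imp_dominated_by: "(\<And>n. a n \<le> b n) \<Longrightarrow> dominated_by a b"
  unfolding dominated_by_def by (intro exI[of _ 1]) auto

lemma dominated_by_trans:
  assumes "dominated_by a b" "dominated_by b c"
  shows "dominated_by a c"
proof -
  obtain C where C: "C > 0" "\<And>n. a n \<le> C * b n" using assms(1) unfolding dominated_by_def by blast
  obtain D where D: "D > 0" "\<And>n. b n \<le> D * c n" using assms(2) unfolding dominated_by_def by blast
  have "a n \<le> (C * D) * c n" for n
  proof -
    have "C * b n \<le> C * (D * c n)" using D(2)[of n] C(1) by (simp add: mult_left_mono)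
    then show ?thesis using C(2)[of n] by (simp add: mult.assoc)
  qed
  then show ?thesis unfolding dominated_by_def using C(1) D(1) by (intro exI[of _ "C * D"]) auto
qed

lemma dominated_by_max:
  assumes "dominated_by a c" "dominated_by b c" "\<And>n. 0 \<le> c n"
  shows "dominated_by (\<lambda>n. max (a n) (b n)) c"
proof -
  obtain C where C: "C > 0" "\<And>n. a n \<le> C * c n" using assms(1) unfolding dominated_by_def by blast
  obtain D where D: "D > 0" "\<And>n. b n \<le> D * c n" using assms(2) unfolding dominated_by_def by blast
  have "C * c n \<le> max C D * c n" "D * c n \<le> max C D * c n" for n
    using assms(3)[of n] by (simp_all add: mult_right_mono)
  then have "max (a n) (b n) \<le> max C D * c n" for n
    using C(2)[of n] D(2)[of n] by (meson max.boundedI order_trans)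
  then show ?thesis unfolding dominated_by_def using C(1) by (intro exI[of _ "max C D"]) auto
qed

lemma dominated_by_max_shift:
  assumes "\<And>n. 0 \<le> a n" "\<And>n. 0 \<le> b n"
    and "dominated_by (\<lambda>n. a (s n)) a" "dominated_by (\<lambda>n. b (s n)) b"
  shows "dominated_by (\<lambda>n. max (a (s n)) (b (s n))) (\<lambda>n. max (a n) (b n))"
proof (rule dominated_by_max)
  have "dominated_by a (\<lambda>n. max (a n) (b n))" "dominated_by b (\<lambda>n. max (a n) (b n))"
    by (simp_all add: le_imp_dominated_by)
  then show "dominated_by (\<lambda>n. a (s n)) (\<lambda>n. max (a n) (b n))"
    "dominated_by (\<lambda>n. b (s n)) (\<lambda>n. max (a n) (b n))"
    using assms(3,4) dominated_by_trans by blast+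
  show "0 \<le> max (a n) (b n)" for n using assms(1)[of n] by simp
qed

lemma approx_refl: "approx a a"
  unfolding approx_def by (intro exI[of _ 1]) simp

lemma approx_sym:
  assumes "approx a b"
  shows "approx b a"
proof -
  obtain c1 c2 where c: "0 < c1" "c1 \<le> c2" "\<And>n. c1 * a n \<le> b n" "\<And>n. b n \<le> c2 * a n"
    using assms unfolding approx_def by blast
  have "0 < c2" using c(1,2) by linarith
  then have "(1 / c2) * b n \<le> a n" "a n \<le> (1 / c1) * b n" for n
    using c(1) c(3,4)[of n] by (simp_all add: field_simps)
  moreover have "0 < 1 / c2" "1 / c2 \<le> 1 / c1" using c(1,2) by (simp_all add: frac_le)
  ultimately show ?thesis unfolding approx_def by blast
qed

lemma approx_trans:
  assumes "approx a b" "approx b c"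
  shows "approx a c"
proof -
  obtain c1 c2 where c: "0 < c1" "c1 \<le> c2" "\<And>n. c1 * a n \<le> b n" "\<And>n. b n \<le> c2 * a n"
    using assms(1) unfolding approx_def by blast
  obtain d1 d2 where d: "0 < d1" "d1 \<le> d2" "\<And>n. d1 * b n \<le> c n" "\<And>n. c n \<le> d2 * b n"
    using assms(2) unfolding approx_def by blast
  have "(d1 * c1) * a n \<le> c n" "c n \<le> (d2 * c2) * a n" for n
  proof -
    have "d1 * (c1 * a n) \<le> d1 * b n" "d2 * b n \<le> d2 * (c2 * a n)"
      using c d by (simp_all add: mult_left_mono)
    then show "(d1 * c1) * a n \<le> c n" "c n \<le> (d2 * c2) * a n"
      using d(3,4)[of n] by (simp_all add: mult.assoc)
  qed
  moreover have "0 < d1 * c1" "d1 * c1 \<le> d2 * c2" using c d by (simp_all add: mult_mono)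
  ultimately show ?thesis unfolding approx_def by blast
qed

lemma approx_imp_dominated_by:
  assumes "approx a b"
  shows "dominated_by a b" "dominated_by b a"
proof -
  obtain c1 c2 where c: "0 < c1" "c1 \<le> c2" "\<And>n. c1 * a n \<le> b n" "\<And>n. b n \<le> c2 * a n"
    using assms unfolding approx_def by blast
  have "a n \<le> (1 / c1) * b n" for n using c(1) c(3)[of n] by (simp add: field_simps)
  then show "dominated_by a b" unfolding dominated_by_def using c(1) by (auto intro!: exI[of _ "1 / c1"])
  show "dominated_by b a" unfolding dominated_by_def using c by (auto intro!: exI[of _ c2])
qed

text \<open>The sign condition matters: \<open>\<approx>\<close> demands \<open>c\<^sub>1 \<le> c\<^sub>2\<close>, which mutual domination
  cannot guarantee where \<open>a n < 0\<close>.\<close>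
lemma dominated_by_imp_approx:
  assumes "\<And>n. 0 \<le> a n" "dominated_by a b" "dominated_by b a"
  shows "approx a b"
proof -
  obtain C D where C: "C > 0" "\<And>n. a n \<le> C * b n" and D: "D > 0" "\<And>n. b n \<le> D * a n"
    using assms(2,3) unfolding dominated_by_def by blast
  define c2 where "c2 = max D (1 / C)"
  have "(1 / C) * a n \<le> b n" for n using C(1) C(2)[of n] by (simp add: field_simps)
  moreover have "b n \<le> c2 * a n" for n
    using D(2)[of n] mult_right_mono[of D c2 "a n"] assms(1)[of n] unfolding c2_def by simp
  ultimately show ?thesis
    unfolding approx_def using C(1) by (intro exI[of _ "1 / C"] exI[of _ c2]) (simp add: c2_def)
qed

lemma approx_imp_cls_eq: "approx a b \<Longrightarrow> cls a = cls b"
  unfolding cls_def by (auto intro: approx_trans approx_sym)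

lemma Oseq_in_cls: "Oseq a \<Longrightarrow> a \<in> cls a"
  unfolding cls_def by (simp add: approx_refl)

lemma cls_in_Oclasses: "Oseq a \<Longrightarrow> cls a \<in> Oclasses"
  unfolding Oclasses_def by auto

lemma Oclasses_memD:
  assumes "A \<in> Oclasses" "a \<in> A"
  shows "Oseq a" "A = cls a"
proof -
  obtain x where x: "Oseq x" "A = cls x" using assms(1) unfolding Oclasses_def by auto
  then show "Oseq a" "A = cls a" using assms(2) approx_imp_cls_eq unfolding cls_def by auto
qed

lemma Oclasses_cases:
  assumes "A \<in> Oclasses"
  obtains a where "Oseq a" "A = cls a"
  using assms unfolding Oclasses_def by auto

lemma Oclasses_nonempty: "A \<in> Oclasses \<Longrightarrow> A \<noteq> {}"
  by (metis Oclasses_cases Oseq_in_cls empty_iff)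

lemma Oseq_nonneg: "Oseq a \<Longrightarrow> 0 \<le> a n"
  unfolding Oseq_def by blast

lemma Oseq_mono: "Oseq a \<Longrightarrow> m \<le> n \<Longrightarrow> a m \<le> a n"
  unfolding Oseq_def by (simp add: monoD)

lemma Oseq_max: "Oseq a \<Longrightarrow> Oseq b \<Longrightarrow> Oseq (\<lambda>n. max (a n) (b n))"
  unfolding Oseq_def mono_def by (meson max.mono max.coboundedI1)

lemma Ole_cls_iff:
  assumes "Oseq a" "Oseq b"
  shows "Ole (cls a) (cls b) \<longleftrightarrow> dominated_by a b"
proof
  assume "Ole (cls a) (cls b)"
  then obtain a' b' where "approx a a'" "approx b b'" "dominated_by a' b'"
    unfolding Ole_def dominated_by_def cls_def by blast
  then have "dominated_by a b'" by (blast intro: dominated_by_trans approx_imp_dominated_by(1))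
  then show "dominated_by a b" using \<open>approx b b'\<close> by (blast intro: dominated_by_trans approx_imp_dominated_by(2))
next
  assume "dominated_by a b"
  then show "Ole (cls a) (cls b)"
    unfolding Ole_def dominated_by_def using assms Oseq_in_cls by blast
qed

fun prefix_max :: "(nat \<Rightarrow> nat \<Rightarrow> real) \<Rightarrow> nat \<Rightarrow> nat \<Rightarrow> real" where
  "prefix_max r 0 n = r 0 n"
| "prefix_max r (Suc k) n = max (prefix_max r k n) (r (Suc k) n)"

lemma prefix_max_ge: "i \<le> k \<Longrightarrow> r i n \<le> prefix_max r k n"
proof (induction k)
  case (Suc k)
  then show ?case by (cases "i = Suc k") (auto intro: max.coboundedI1)
qed simp

lemma prefix_max_mono: "j \<le> k \<Longrightarrow> prefix_max r j n \<le> prefix_max r k n"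
proof (induction k)
  case (Suc k)
  then show ?case by (cases "j = Suc k") (auto intro: max.coboundedI1)
qed simp

lemma prefix_max_closed:
  assumes "\<And>i. P (r i)" "\<And>a b. P a \<Longrightarrow> P b \<Longrightarrow> P (\<lambda>n. max (a n) (b n))"
  shows "P (prefix_max r k)"
proof (induction k)
  case 0
  have "prefix_max r 0 = r 0" by (rule ext) simp
  then show ?case using assms(1) by simp
next
  case (Suc k)
  have "prefix_max r (Suc k) = (\<lambda>n. max (prefix_max r k n) (r (Suc k) n))" by (rule ext) simp
  then show ?case using Suc assms by simp
qed

lemma Oseq_prefix_max: "(\<And>i. Oseq (r i)) \<Longrightarrow> Oseq (prefix_max r k)"
  by (rule prefix_max_closed) (simp_all add: Oseq_max)

lemma dominated_by_prefix_max_iff: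
  assumes "\<And>n. 0 \<le> b n"
  shows "(\<forall>k. dominated_by (prefix_max r k) b) \<longleftrightarrow> (\<forall>i. dominated_by (r i) b)"
proof
  assume "\<forall>k. dominated_by (prefix_max r k) b"
  moreover have "dominated_by (r i) (prefix_max r i)" for i
    by (rule le_imp_dominated_by, rule prefix_max_ge) simp
  ultimately show "\<forall>i. dominated_by (r i) b" using dominated_by_trans by blast
next
  assume r: "\<forall>i. dominated_by (r i) b"
  show "\<forall>k. dominated_by (prefix_max r k) b"
  proof (intro allI prefix_max_closed[where P = "\<lambda>a. dominated_by a b"])
    show "dominated_by (r i) b" for i using r by blast
    show "dominated_by (\<lambda>n. max (x n) (y n)) b" if "dominated_by x b" "dominated_by y b" for x y
      using that assms by (rule dominated_by_max)
  qed
qed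

lemma Ototal_range_prefix_max:
  assumes "\<And>i. Oseq (r i)"
  shows "Ototal (range (\<lambda>k. cls (prefix_max r k)))"
proof -
  have M: "Oseq (prefix_max r k)" for k using assms by (rule Oseq_prefix_max)
  have le: "Ole (cls (prefix_max r j)) (cls (prefix_max r k))" if "j \<le> k" for j k
    using that M by (simp add: Ole_cls_iff le_imp_dominated_by prefix_max_mono)
  show ?thesis unfolding Ototal_def
  proof (intro ballI)
    fix A B assume "A \<in> range (\<lambda>k. cls (prefix_max r k))" "B \<in> range (\<lambda>k. cls (prefix_max r k))"
    then obtain j k where "A = cls (prefix_max r j)" "B = cls (prefix_max r k)" by blast
    then show "Ole A B \<or> Ole B A" using le nat_le_linear[of j k] by blast
  qed
qed

lemma Oupper_range_prefix_max:
  assumes "\<And>i. Oseq (r i)"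
  shows "Oupper (range (\<lambda>k. cls (prefix_max r k))) = Oupper (range (\<lambda>i. cls (r i)))"
proof -
  have M: "Oseq (prefix_max r k)" for k using assms by (rule Oseq_prefix_max)
  have iff: "(\<forall>k. Ole (cls (prefix_max r k)) B) \<longleftrightarrow> (\<forall>i. Ole (cls (r i)) B)" if "B \<in> Oclasses" for B
  proof -
    obtain b where "Oseq b" "B = cls b" using \<open>B \<in> Oclasses\<close> by (rule Oclasses_cases)
    then show ?thesis using assms M by (simp add: Ole_cls_iff dominated_by_prefix_max_iff Oseq_nonneg)
  qed
  show ?thesis unfolding Oupper_def
  proof (rule Collect_cong)
    fix B
    show "B \<in> Oclasses \<and> (\<forall>A\<in>range (\<lambda>k. cls (prefix_max r k)). Ole A B) \<longleftrightarrow>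
          B \<in> Oclasses \<and> (\<forall>A\<in>range (\<lambda>i. cls (r i)). Ole A B)"
      unfolding ball_simps using iff[of B] by blast
  qed
qed

lemma countable_chain_with_same_DM_sup:
  assumes "\<Gamma> \<subseteq> Oclasses" "countable \<Gamma>"
    and rep: "\<forall>A\<in>\<Gamma>. \<exists>a\<in>A. Q a"
    and Q_max: "\<And>a b. Oseq a \<Longrightarrow> Oseq b \<Longrightarrow> Q a \<Longrightarrow> Q b \<Longrightarrow> Q (\<lambda>n. max (a n) (b n))"
    and cls_in_S: "\<And>a. Oseq a \<Longrightarrow> Q a \<Longrightarrow> cls a \<in> S"
  shows "\<exists>T. T \<subseteq> S \<and> countable T \<and> Ototal T \<and> DM_sup T = DM_sup \<Gamma>"
proof (cases "\<Gamma> = {}")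
  case True
  then show ?thesis unfolding Ototal_def by (intro exI[of _ "{}"]) auto
next
  case False
  define g where "g = from_nat_into \<Gamma>"
  have g: "range g = \<Gamma>" using False assms(2) unfolding g_def by (simp add: range_from_nat_into)
  have "\<forall>i. \<exists>a. a \<in> g i \<and> Q a" using rep g by blast
  then obtain r where r: "\<And>i. r i \<in> g i" "\<And>i. Q (r i)" by metis
  have "g i \<in> Oclasses" for i using assms(1) g by blast
  then have r_Oseq: "Oseq (r i)" and g_eq: "g i = cls (r i)" for i
    using Oclasses_memD r(1) by blast+
  have M: "Oseq (prefix_max r k) \<and> Q (prefix_max r k)" for k
    by (rule prefix_max_closed[where P = "\<lambda>a. Oseq a \<and> Q a"]) (simp_all add: r r_Oseq Q_max Oseq_max)
  have \<Gamma>_eq: "\<Gamma> = range (\<lambda>i. cls (r i))" using g g_eq by simp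
  define T where "T = range (\<lambda>k. cls (prefix_max r k))"
  have "T \<subseteq> S" unfolding T_def using M cls_in_S by blast
  moreover have "Ototal T" unfolding T_def using r_Oseq by (rule Ototal_range_prefix_max)
  moreover have "DM_sup T = DM_sup \<Gamma>"
    unfolding DM_sup_def T_def \<Gamma>_eq using r_Oseq by (simp add: Oupper_range_prefix_max)
  ultimately show ?thesis unfolding T_def by blast
qed

lemma BB_eq: "BB = {A \<in> Oclasses. \<exists>a\<in>A. dominated_by (\<lambda>n. a (Suc n)) a}"
  unfolding BB_def dominated_by_def ..

lemma cls_in_BB: "Oseq a \<Longrightarrow> dominated_by (\<lambda>n. a (Suc n)) a \<Longrightarrow> cls a \<in> BB"
  unfolding BB_eq using Oseq_in_cls cls_in_Oclasses by blast

definition doubling :: "(nat \<Rightarrow> real) \<Rightarrow> bool" where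
  "doubling a \<longleftrightarrow> dominated_by (\<lambda>n. a (2 * n)) a"

lemma doubling_max: "Oseq a \<Longrightarrow> Oseq b \<Longrightarrow> doubling a \<Longrightarrow> doubling b \<Longrightarrow> doubling (\<lambda>n. max (a n) (b n))"
  unfolding doubling_def by (rule dominated_by_max_shift[OF Oseq_nonneg Oseq_nonneg])

lemma LL_has_doubling_rep:
  assumes "A \<in> LL"
  shows "\<exists>a\<in>A. doubling a"
proof -
  obtain a m where a: "A \<in> Oclasses" "a \<in> A" "2 \<le> m" "cls (\<lambda>n. a (m * n)) = cls a"
    using assms unfolding LL_def by blast
  then have "Oseq a" by (simp add: Oclasses_memD)
  then have "approx (\<lambda>n. a (m * n)) a" using a(4) Oseq_in_cls unfolding cls_def by blast
  then have "dominated_by (\<lambda>n. a (m * n)) a" by (rule approx_imp_dominated_by)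
  moreover have "dominated_by (\<lambda>n. a (2 * n)) (\<lambda>n. a (m * n))"
    using \<open>Oseq a\<close> a(3) by (intro le_imp_dominated_by Oseq_mono) simp_all
  ultimately have "doubling a" unfolding doubling_def by (rule dominated_by_trans[rotated])
  then show ?thesis using a(2) by blast
qed

lemma doubling_cls_in_LL:
  assumes "Oseq a" "doubling a"
  shows "cls a \<in> LL"
proof -
  have "dominated_by a (\<lambda>n. a (2 * n))"
    using assms(1) by (intro le_imp_dominated_by Oseq_mono) simp_all
  then have "approx a (\<lambda>n. a (2 * n))"
    using Oseq_nonneg[OF assms(1)] assms(2) unfolding doubling_def by (intro dominated_by_imp_approx)
  then have "cls (\<lambda>n. a (2 * n)) = cls a" by (rule approx_imp_cls_eq[OF approx_sym])
  moreover have "a \<in> cls a" "cls a \<in> Oclasses" using assms(1) by (simp_all add: Oseq_in_cls cls_in_Oclasses)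
  ultimately show ?thesis unfolding LL_def by (intro CollectI conjI bexI[of _ a] exI[of _ 2]) simp_all
qed

theorem lemma3p1:
  assumes "\<Gamma> \<subseteq> Oclasses" and "countable \<Gamma>"
  shows "(\<exists>T. T \<subseteq> Oclasses \<and> countable T \<and> Ototal T \<and> DM_sup T = DM_sup \<Gamma>)
       \<and> (\<Gamma> \<subseteq> BB \<longrightarrow> (\<exists>T. T \<subseteq> BB \<and> countable T \<and> Ototal T \<and> DM_sup T = DM_sup \<Gamma>))
       \<and> (\<Gamma> \<subseteq> LL \<longrightarrow> (\<exists>T. T \<subseteq> LL \<and> countable T \<and> Ototal T \<and> DM_sup T = DM_sup \<Gamma>))"
proof (intro conjI impI)
  show "\<exists>T. T \<subseteq> Oclasses \<and> countable T \<and> Ototal T \<and> DM_sup T = DM_sup \<Gamma>"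
  proof (rule countable_chain_with_same_DM_sup[where Q = "\<lambda>_. True"])
    show "\<forall>A\<in>\<Gamma>. \<exists>a\<in>A. True" using assms(1) Oclasses_nonempty by blast
  qed (simp_all add: assms cls_in_Oclasses)
next
  assume "\<Gamma> \<subseteq> BB"
  show "\<exists>T. T \<subseteq> BB \<and> countable T \<and> Ototal T \<and> DM_sup T = DM_sup \<Gamma>"
  proof (rule countable_chain_with_same_DM_sup[where Q = "\<lambda>a. dominated_by (\<lambda>n. a (Suc n)) a"])
    show "\<forall>A\<in>\<Gamma>. \<exists>a\<in>A. dominated_by (\<lambda>n. a (Suc n)) a" using \<open>\<Gamma> \<subseteq> BB\<close> unfolding BB_eq by blast
    show "dominated_by (\<lambda>n. max (a (Suc n)) (b (Suc n))) (\<lambda>n. max (a n) (b n))"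
      if "Oseq a" "Oseq b" "dominated_by (\<lambda>n. a (Suc n)) a" "dominated_by (\<lambda>n. b (Suc n)) b" for a b
      using that(3,4) by (rule dominated_by_max_shift[OF Oseq_nonneg[OF that(1)] Oseq_nonneg[OF that(2)]])
  qed (simp_all add: assms cls_in_BB)
next
  assume "\<Gamma> \<subseteq> LL"
  show "\<exists>T. T \<subseteq> LL \<and> countable T \<and> Ototal T \<and> DM_sup T = DM_sup \<Gamma>"
  proof (rule countable_chain_with_same_DM_sup[where Q = doubling])
    show "\<forall>A\<in>\<Gamma>. \<exists>a\<in>A. doubling a" using \<open>\<Gamma> \<subseteq> LL\<close> LL_has_doubling_rep by blast
  qed (simp_all add: assms doubling_max doubling_cls_in_LL)
qed

end
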